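(* Let $\sigma_{naive}$ be naive semantics. For every two argumentation frameworks $AF=(AR,Attacks)$, $AF'=(AR',Attacks')$ with $AF\preceq_N AF'$ and every $E\in\sigma_{naive}(AF)$, there exists $E'\in\sigma_{naive}(AF')$ with $E'\not\subseteq AR$ or $E'=E$.
   Context: An argumentation framework is a pair $(AR,Attacks)$ with $AR$ a finite set and $Attacks\subseteq AR\times AR$; $a$ attacks $b$ iff $(a,b)\in Attacks$. A set $S\subseteq AR$ is conflict-free iff no element of $S$ attacks an element of $S$. $\sigma_{naive}(AF)$ is the set of all $\subseteq$-maximal conflict-free subsets of $AR$. $AF\preceq_N AF'$ (normal expansion) iff $AR\subseteq AR'$, $Attacks\subseteq Attacks'$ and no $(a,b)\in Attacks'\setminus Attacks$ has both $a,b\in AR$. *)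

theory Defs
  imports Main
begin

type_synonym 'a af = "'a set \<times> ('a \<times> 'a) set"

definition is_af :: "'a af \<Rightarrow> bool" where
  "is_af AF \<longleftrightarrow> finite (fst AF) \<and> snd AF \<subseteq> fst AF \<times> fst AF"

definition conflict_free :: "'a af \<Rightarrow> 'a set \<Rightarrow> bool" where
  "conflict_free AF S \<longleftrightarrow> S \<subseteq> fst AF \<and> (\<forall>a\<in>S. \<forall>b\<in>S. (a, b) \<notin> snd AF)"

definition naive :: "'a af \<Rightarrow> 'a set set" where
  "naive AF = {S. conflict_free AF S \<and> (\<forall>T. conflict_free AF T \<and> S \<subseteq> T \<longrightarrow> T = S)}"

definition normal_expansion :: "'a af \<Rightarrow> 'a af \<Rightarrow> bool" where
  "normal_expansion AF AF' \<longleftrightarrow>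
     fst AF \<subseteq> fst AF' \<and> snd AF \<subseteq> snd AF' \<and>
     (\<forall>(a, b) \<in> snd AF' - snd AF. \<not> (a \<in> fst AF \<and> b \<in> fst AF))"

end

theory Submission
  imports Defs
begin

text \<open>Extend E to a naive extension E' of AF'. If E' stays inside AR, then no new attack
  can lie inside E', so E' is conflict-free already in AF, and maximality of E forces E' = E.\<close>

lemma conflict_free_normal_expansion_iff:
  assumes "normal_expansion AF AF'" and "S \<subseteq> fst AF"
  shows "conflict_free AF' S \<longleftrightarrow> conflict_free AF S"
  using assms unfolding normal_expansion_def conflict_free_def by blast

lemma conflict_free_subset_naive:
  assumes "finite (fst AF)" and "conflict_free AF S"
  obtains E where "E \<in> naive AF" and "S \<subseteq> E"
proof -
  have "finite {T. conflict_free AF T}"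
    using assms(1) by (rule finite_subset[rotated, OF finite_Pow_iff[THEN iffD2]])
      (auto simp: conflict_free_def)
  then obtain E where "conflict_free AF E" "S \<subseteq> E"
    and "\<forall>T \<in> {T. conflict_free AF T}. E \<subseteq> T \<longrightarrow> E = T"
    using finite_has_maximal2 assms(2) by (metis mem_Collect_eq)
  then show thesis
    using that unfolding naive_def by blast
qed

theorem proposition36:
  fixes AF AF' :: "'a af" and E :: "'a set"
  assumes "is_af AF" and "is_af AF'"
    and "normal_expansion AF AF'"
    and "E \<in> naive AF"
  shows "\<exists>E' \<in> naive AF'. \<not> E' \<subseteq> fst AF \<or> E' = E"
proof -
  have E_cf: "conflict_free AF E" and E_max: "\<And>T. conflict_free AF T \<Longrightarrow> E \<subseteq> T \<Longrightarrow> T = E"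
    using assms(4) by (auto simp: naive_def)
  have "E \<subseteq> fst AF"
    using E_cf by (simp add: conflict_free_def)
  then have "conflict_free AF' E"
    using E_cf assms(3) by (simp add: conflict_free_normal_expansion_iff)
  moreover have "finite (fst AF')"
    using assms(2) by (simp add: is_af_def)
  ultimately obtain E' where E': "E' \<in> naive AF'" "E \<subseteq> E'"
    using conflict_free_subset_naive by blast
  have "E' = E" if "E' \<subseteq> fst AF"
  proof (rule E_max)
    show "conflict_free AF E'"
      using E'(1) that assms(3) by (simp add: naive_def conflict_free_normal_expansion_iff)
  qed (fact E'(2))
  then show ?thesis
    using E'(1) by blast
qed

end
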